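(* A (possibly infinite) tree $T$ is cat-win if and only if $T$ contains the infinite complete binary tree $B^{\omega}$ as a minor.
   Context: Cat Herding is played on a simple, possibly infinite graph $G$. The cat first places its token on a vertex. Then the players alternate, the herder moving first: the herder deletes one edge of the current graph, and then, unless the cat's current vertex has degree $0$ in the current graph, the cat moves its token along a finite path with at least one edge in the current graph to a different vertex. The cat is captured when its vertex has degree $0$ in the current graph. $G$ is cat-win if the cat has a strategy (including the choice of starting vertex) that is never captured, and herder-win if the herder has a strategy that eventually captures the cat. $B^{\omega}$ is the graph with vertex set $\{L,R\}^*$ (all finite words over $\{L,R\}$) and edges between $\alpha$ and $\alpha t$ for all $\alpha\in\{L,R\}^*$, $t\in\{L,R\}$. *)

theory Defs
  imports Main
begin

definition simple_graph :: "'a set \<Rightarrow> 'a set set \<Rightarrow> bool" where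
  "simple_graph V E \<longleftrightarrow> (\<forall>e\<in>E. \<exists>u v. u \<noteq> v \<and> u \<in> V \<and> v \<in> V \<and> e = {u, v})"

definition reach :: "'a set set \<Rightarrow> 'a \<Rightarrow> 'a \<Rightarrow> bool" where
  "reach F u v \<longleftrightarrow> (\<lambda>x y. {x, y} \<in> F)\<^sup>*\<^sup>* u v"

definition reach_within :: "'a set set \<Rightarrow> 'a set \<Rightarrow> 'a \<Rightarrow> 'a \<Rightarrow> bool" where
  "reach_within F S u v \<longleftrightarrow> (\<lambda>x y. x \<in> S \<and> y \<in> S \<and> {x, y} \<in> F)\<^sup>*\<^sup>* u v"

definition connected_set :: "'a set set \<Rightarrow> 'a set \<Rightarrow> bool" where
  "connected_set E S \<longleftrightarrow> (\<forall>u\<in>S. \<forall>v\<in>S. reach_within E S u v)"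

definition is_cycle :: "'a set set \<Rightarrow> 'a list \<Rightarrow> bool" where
  "is_cycle E cs \<longleftrightarrow> length cs \<ge> 3 \<and> distinct cs \<and>
     (\<forall>i. Suc i < length cs \<longrightarrow> {cs ! i, cs ! Suc i} \<in> E) \<and> {last cs, hd cs} \<in> E"

definition is_tree :: "'a set \<Rightarrow> 'a set set \<Rightarrow> bool" where
  "is_tree V E \<longleftrightarrow> simple_graph V E \<and> V \<noteq> {} \<and> connected_set E V \<and>
     (\<nexists>cs. set cs \<subseteq> V \<and> is_cycle E cs)"

definition is_minor :: "'b set \<Rightarrow> 'b set set \<Rightarrow> 'a set \<Rightarrow> 'a set set \<Rightarrow> bool" where
  "is_minor VH EH VG EG \<longleftrightarrow> (\<exists>br :: 'b \<Rightarrow> 'a set.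
     (\<forall>x\<in>VH. br x \<noteq> {} \<and> br x \<subseteq> VG \<and> connected_set EG (br x)) \<and>
     (\<forall>x\<in>VH. \<forall>y\<in>VH. x \<noteq> y \<longrightarrow> br x \<inter> br y = {}) \<and>
     (\<forall>x y. {x, y} \<in> EH \<longrightarrow> (\<exists>u\<in>br x. \<exists>v\<in>br y. {u, v} \<in> EG)))"

datatype dir = L | R

definition Bomega_V :: "dir list set" where
  "Bomega_V = UNIV"

definition Bomega_E :: "dir list set set" where
  "Bomega_E = {{\<alpha>, \<alpha> @ [t]} | \<alpha> t. True}"

text \<open>A play: the herder's deletions are es 0, es 1, ...; before the herder's n-th move
  the deleted edges are deleted es n. The cat's strategy sigma maps the list of
  the herder's moves so far to the cat's new vertex; the cat starts at v0.\<close>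

definition deleted :: "(nat \<Rightarrow> 'a set) \<Rightarrow> nat \<Rightarrow> 'a set set" where
  "deleted es n = es ` {..<n}"

definition cat_pos :: "'a \<Rightarrow> ('a set list \<Rightarrow> 'a) \<Rightarrow> (nat \<Rightarrow> 'a set) \<Rightarrow> nat \<Rightarrow> 'a" where
  "cat_pos v0 \<sigma> es n = (if n = 0 then v0 else \<sigma> (map es [0..<n]))"

definition isolated :: "'a set set \<Rightarrow> 'a \<Rightarrow> bool" where
  "isolated F v \<longleftrightarrow> (\<nexists>w. {v, w} \<in> F)"

text \<open>The cat wins: it has a starting vertex and a strategy such that, against every
  legal sequence of herder moves, it is never captured and always moves legally
  (along a path with at least one edge of the current graph to a different vertex).\<close>
definition cat_win :: "'a set \<Rightarrow> 'a set set \<Rightarrow> bool" where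
  "cat_win V E \<longleftrightarrow> (\<exists>v0 \<in> V. \<exists>\<sigma> :: 'a set list \<Rightarrow> 'a.
     \<not> isolated E v0 \<and>
     (\<forall>es :: nat \<Rightarrow> 'a set. \<forall>n.
        (\<forall>i\<le>n. es i \<in> E - deleted es i) \<longrightarrow>
          (let F = E - deleted es (Suc n); p = cat_pos v0 \<sigma> es n; q = cat_pos v0 \<sigma> es (Suc n)
           in \<not> isolated F p \<and> q \<noteq> p \<and> reach F p q)))"

end

(*
  If G has a B\<^sup>\<omega> minor, the cat sits in the branch set of a node \<alpha>, at the end of the edge
  linking it to the left child, and keeps the invariant that no deleted edge lies inside the union of
  the branch sets below \<alpha>. A deleted edge e damages at most one child of \<alpha> (by lying below it or
  being its link edge), and the cat moves into the branch set of an undamaged child, preferring the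
  left one; when it has to go right, e avoids the branch set of \<alpha>, which the cat crosses to reach
  the right link edge. This direction holds in every graph.

  Conversely, call (F, a) attainable if some legal play leaves at most the edges F and the cat in the
  component of a in F. From an attainable (F, a) the herder can cut two distinct edges, both reached
  from a inside F minus these edges, whose far ends c L, c R make (F - {e L}, c L) and
  (F - {e R}, c R) attainable again. Iterating along all words over {L, R} gives a binary tree of
  positions. In a tree every edge is a bridge, so the components of the roots after cutting both
  edges of their forks are pairwise disjoint, and they are the branch sets of a B\<^sup>\<omega> minor.
*)

theory Submission
  imports Defs "HOL-Library.Sublist"
begin

lemma reach_refl [simp]: "reach F x x"
  by (simp add: reach_def)

lemma reach_edge: "{x, y} \<in> F \<Longrightarrow> reach F x y"
  by (simp add: reach_def r_into_rtranclp)

lemma reach_trans: "reach F x y \<Longrightarrow> reach F y z \<Longrightarrow> reach F x z"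
  unfolding reach_def by (rule rtranclp_trans)

lemma reach_sym: "reach F x y \<Longrightarrow> reach F y x"
proof -
  have "symp (\<lambda>x y. {x, y} \<in> F)"
    by (auto intro: sympI simp: insert_commute)
  then show "reach F x y \<Longrightarrow> reach F y x"
    unfolding reach_def by (blast dest: sympD[OF symp_rtranclp])
qed

lemma reach_step: "reach F x y \<Longrightarrow> {y, z} \<in> F \<Longrightarrow> reach F x z"
  by (meson reach_edge reach_trans)

lemma reach_mono: "reach F x y \<Longrightarrow> F \<subseteq> G \<Longrightarrow> reach G x y"
  unfolding reach_def by (erule rtranclp_mono[THEN predicate2D, rotated]) auto

lemma reach_induct [consumes 1, case_names base step]:
  assumes "reach F x y" "P x"
    and "\<And>y z. reach F x y \<Longrightarrow> {y, z} \<in> F \<Longrightarrow> P y \<Longrightarrow> P z"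
  shows "P y"
  using assms(1) unfolding reach_def
  by (induction rule: rtranclp_induct) (use assms(2,3) in \<open>auto simp: reach_def\<close>)

lemma reach_not_isolated:
  assumes "reach F p q" "p \<noteq> q"
  shows "\<not> isolated F p"
  using assms unfolding reach_def isolated_def
  by (auto elim: converse_rtranclpE)

lemma reach_first_edge:
  assumes "reach F p q" "p \<noteq> q"
  obtains x where "{p, x} \<in> F" "reach (F - {{p, x}}) x q"
  using assms
proof (induction arbitrary: thesis rule: reach_induct)
  case (step y z)
  show ?case
  proof (cases "y = p")
    case True
    with step show ?thesis by auto
  next
    case False
    then obtain x where x: "{p, x} \<in> F" "reach (F - {{p, x}}) x y"
      using step.IH by blast
    have "{y, z} \<noteq> {p, x}"
      using False step.prems(2) by (auto simp: doubleton_eq_iff)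
    with step.hyps(2) x show ?thesis
      by (intro step.prems(1)[of x]) (auto intro: reach_step)
  qed
qed simp

lemma reach_insert_edge:
  assumes "reach (insert {a, b} F) x y"
  shows "reach F x y \<or> (reach F x a \<and> reach F b y) \<or> (reach F x b \<and> reach F a y)"
  using assms
proof (induction rule: reach_induct)
  case (step y z)
  then show ?case
    by (auto simp: doubleton_eq_iff intro: reach_step reach_edge)
qed simp

lemma reach_avoiding:
  assumes "reach F x y" "w \<in> g" "\<not> reach F x w"
  shows "reach (F - {g}) x y"
  using assms(1)
proof (induction rule: reach_induct)
  case (step y z)
  have "reach F x z"
    using step.hyps by (rule reach_step)
  with step.hyps(1) assms(2,3) have "{y, z} \<noteq> g"
    by auto
  with step.hyps(2) step.IH show ?case
    by (simp add: reach_step)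
qed simp

definition component :: "'a set set \<Rightarrow> 'a \<Rightarrow> 'a set" where
  "component F a = {w. reach F a w}"

lemma in_component_iff [simp]: "w \<in> component F a \<longleftrightarrow> reach F a w"
  by (simp add: component_def)

lemma component_mono: "F \<subseteq> G \<Longrightarrow> component F a \<subseteq> component G a"
  using reach_mono by fastforce

lemma component_subset: "reach F a b \<Longrightarrow> component F b \<subseteq> component F a"
  using reach_trans by fastforce

lemma reach_within_reach:
  assumes "reach_within F S x y" "\<forall>d\<in>D. \<not> d \<subseteq> S"
  shows "reach (F - D) x y"
  using assms(1) unfolding reach_within_def
proof (induction rule: rtranclp_induct)
  case (step y z)
  then have "{y, z} \<subseteq> S" "{y, z} \<in> F"
    by simp_all
  with assms(2) have "{y, z} \<in> F - D"
    by blast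
  with step.IH show ?case
    by (rule reach_step)
qed simp

lemma connected_set_component:
  assumes "F \<subseteq> E"
  shows "connected_set E (component F a)"
proof -
  have from_a: "reach_within E (component F a) a w" if "reach F a w" for w
    using that
  proof (induction rule: reach_induct)
    case (step y z)
    then show ?case
      using assms unfolding reach_within_def
      by (auto intro: rtranclp.rtrancl_into_rtrancl reach_step)
  qed (simp add: reach_within_def)
  have "symp (\<lambda>x y. x \<in> component F a \<and> y \<in> component F a \<and> {x, y} \<in> E)"
    by (auto intro: sympI simp: insert_commute)
  then have to_a: "reach_within E (component F a) w a" if "reach F a w" for w
    using from_a[OF that] unfolding reach_within_def by (blast dest: sympD[OF symp_rtranclp])
  show ?thesis
    unfolding connected_set_def
    using to_a from_a by (meson in_component_iff reach_within_def rtranclp_trans)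
qed

fun walk :: "'a set set \<Rightarrow> 'a list \<Rightarrow> bool" where
  "walk F (x # y # vs) \<longleftrightarrow> {x, y} \<in> F \<and> walk F (y # vs)"
| "walk F _ \<longleftrightarrow> True"

lemma walk_mono: "walk F vs \<Longrightarrow> F \<subseteq> G \<Longrightarrow> walk G vs"
  by (induction F vs rule: walk.induct) auto

lemma walk_append: "walk F (xs @ y # ys) \<longleftrightarrow> walk F (xs @ [y]) \<and> walk F (y # ys)"
  by (induction xs rule: induct_list012) simp_all

lemma walk_nth: "walk F vs \<Longrightarrow> Suc i < length vs \<Longrightarrow> {vs ! i, vs ! Suc i} \<in> F"
  by (induction F vs arbitrary: i rule: walk.induct) (auto simp: nth_Cons split: nat.split)

lemma walk_reach: "walk F vs \<Longrightarrow> vs \<noteq> [] \<Longrightarrow> reach F (hd vs) (last vs)"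
  by (induction F vs rule: walk.induct) (auto intro: reach_trans reach_edge)

lemma reach_distinct_walk:
  assumes "reach F x y"
  obtains vs where "vs \<noteq> []" "hd vs = x" "last vs = y" "distinct vs" "walk F vs"
  using assms
proof (induction arbitrary: thesis rule: reach_induct)
  case base
  show ?case
    by (rule base[of "[x]"]) simp_all
next
  case (step y z)
  obtain vs where vs: "vs \<noteq> []" "hd vs = x" "last vs = y" "distinct vs" "walk F vs"
    using step.IH by blast
  show ?case
  proof (cases "z \<in> set vs")
    case True
    then obtain as bs where split: "vs = as @ z # bs"
      by (meson split_list)
    have "walk F (as @ [z])"
      using vs(5) walk_append[of F as z bs] by (simp add: split)
    moreover have "hd (as @ [z]) = x"
      using vs(2) by (cases as) (simp_all add: split)
    moreover have "distinct (as @ [z])"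
      using vs(4) by (simp add: split)
    ultimately show ?thesis
      by (intro step.prems[of "as @ [z]"]) simp_all
  next
    case False
    have snoc: "vs = butlast vs @ [y]"
      using vs(1,3) by (metis append_butlast_last_id)
    then have "walk F (butlast vs @ [y, z])"
      using vs(5) step.hyps(2) walk_append[of F "butlast vs" y "[z]"] by simp
    then have "walk F (vs @ [z])"
      using snoc by (metis append.assoc append_Cons append_Nil)
    with vs False show ?thesis
      by (intro step.prems[of "vs @ [z]"]) simp_all
  qed
qed

lemma walk_last_crossing:
  assumes "walk F vs" "vs \<noteq> []" "\<not> walk (F - {g}) vs"
  shows "\<exists>ws. ws \<noteq> [] \<and> length ws < length vs \<and> walk (F - {g}) ws \<and> last ws = last vs \<and> hd ws \<in> g"
  using assms
proof (induction F vs rule: walk.induct)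
  case (1 F x y vs)
  show ?case
  proof (cases "walk (F - {g}) (y # vs)")
    case True
    with "1.prems" have "{x, y} = g"
      by auto
    with True show ?thesis
      by (intro exI[of _ "y # vs"]) auto
  next
    case False
    have "walk F (y # vs)"
      using "1.prems"(1) by simp
    then obtain ws where "ws \<noteq> []" "length ws < length (y # vs)" "walk (F - {g}) ws"
      "last ws = last (y # vs)" "hd ws \<in> g"
      using "1.IH" False by blast
    then show ?thesis
      by (intro exI[of _ ws]) simp
  qed
qed simp_all

subsection \<open>Forests\<close>

definition forest :: "'a set \<Rightarrow> 'a set set \<Rightarrow> bool" where
  "forest V E \<longleftrightarrow> simple_graph V E \<and> (\<nexists>cs. set cs \<subseteq> V \<and> is_cycle E cs)"

lemma tree_forest: "is_tree V E \<Longrightarrow> forest V E"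
  by (simp add: is_tree_def forest_def)

lemma simple_graph_edge:
  assumes "simple_graph V E" "{u, v} \<in> E"
  shows "u \<noteq> v" "u \<in> V" "v \<in> V"
  using assms unfolding simple_graph_def by (fastforce simp: doubleton_eq_iff)+

lemma walk_vertices: "simple_graph V E \<Longrightarrow> walk E vs \<Longrightarrow> 2 \<le> length vs \<Longrightarrow> set vs \<subseteq> V"
proof (induction E vs rule: walk.induct)
  case (1 E x y vs)
  then show ?case
    using simple_graph_edge[OF "1.prems"(1)] by (cases vs) auto
qed simp_all

lemma component_vertices:
  assumes "simple_graph V E" "F \<subseteq> E" "a \<in> V"
  shows "component F a \<subseteq> V"
proof
  fix w
  assume "w \<in> component F a"
  then have "reach F a w"
    by simp
  then show "w \<in> V"
  proof (induction rule: reach_induct)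
    case (step y z)
    then have "{y, z} \<in> E"
      using assms(2) by blast
    then show ?case
      by (rule simple_graph_edge(3)[OF assms(1)])
  qed (rule assms(3))
qed

lemma forest_bridge:
  assumes "forest V E" "F \<subseteq> E" "{u, v} \<in> F"
  shows "\<not> reach (F - {{u, v}}) u v"
proof
  assume "reach (F - {{u, v}}) u v"
  then obtain vs where vs: "vs \<noteq> []" "hd vs = u" "last vs = v" "distinct vs" "walk (F - {{u, v}}) vs"
    by (rule reach_distinct_walk)
  have sg: "simple_graph V E" and acyclic: "\<nexists>cs. set cs \<subseteq> V \<and> is_cycle E cs"
    using assms(1) by (simp_all add: forest_def)
  have uv: "{u, v} \<in> E"
    using assms(2,3) by blast
  have "3 \<le> length vs"
  proof (rule ccontr)
    assume "\<not> 3 \<le> length vs"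
    with vs(1) consider a where "vs = [a]" | a b where "vs = [a, b]"
      by (cases vs; cases "tl vs"; cases "tl (tl vs)") auto
    then show False
      using vs simple_graph_edge(1)[OF sg uv] by cases auto
  qed
  moreover have walk: "walk E vs"
    using vs(5) assms(2) walk_mono by blast
  moreover have "{last vs, hd vs} \<in> E"
    using uv vs(2,3) by (simp add: insert_commute)
  ultimately have "is_cycle E vs" "set vs \<subseteq> V"
    using vs(4) walk_nth[OF walk] walk_vertices[OF sg walk] by (simp_all add: is_cycle_def)
  with acyclic show False
    by blast
qed

lemma forest_far_side_disjoint:
  assumes "forest V E" "F \<subseteq> E" "{u, c} \<in> F" "H \<subseteq> F - {{u, c}}" "reach H a u"
  shows "component H a \<inter> component (F - {{u, c}}) c = {}"
proof (rule ccontr)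
  assume "component H a \<inter> component (F - {{u, c}}) c \<noteq> {}"
  then obtain w where "reach H a w" "reach (F - {{u, c}}) c w"
    by auto
  with assms(4,5) have "reach (F - {{u, c}}) u c"
    by (meson reach_mono reach_sym reach_trans)
  with forest_bridge[OF assms(1-3)] show False ..
qed

lemma forest_far_sides_disjoint:
  assumes "forest V E" "F \<subseteq> E" "{u1, c1} \<in> F" "{u2, c2} \<in> F" "{u1, c1} \<noteq> {u2, c2}"
    and "reach (F - {{u1, c1}, {u2, c2}}) u1 u2"
  shows "component (F - {{u1, c1}}) c1 \<inter> component (F - {{u2, c2}}) c2 = {}"
proof (rule ccontr)
  let ?H = "F - {{u1, c1}, {u2, c2}}"
  have bridge1: "\<not> reach (F - {{u1, c1}}) u1 c1" and bridge2: "\<not> reach (F - {{u2, c2}}) u2 c2"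
    using forest_bridge[OF assms(1,2)] assms(3,4) by blast+
  have H1: "?H \<subseteq> F - {{u1, c1}}" and H2: "?H \<subseteq> F - {{u2, c2}}"
    by blast+
  have not_c2_c1: "\<not> reach (F - {{u2, c2}}) c2 c1"
  proof
    assume "reach (F - {{u2, c2}}) c2 c1"
    moreover have "{c1, u1} \<in> F - {{u2, c2}}"
      using assms(3,5) by (auto simp: insert_commute)
    moreover have "reach (F - {{u2, c2}}) u1 u2"
      using assms(6) H2 by (rule reach_mono)
    ultimately have "reach (F - {{u2, c2}}) u2 c2"
      by (meson reach_step reach_sym reach_trans)
    with bridge2 show False ..
  qed
  assume "component (F - {{u1, c1}}) c1 \<inter> component (F - {{u2, c2}}) c2 \<noteq> {}"
  then obtain w where w1: "reach (F - {{u1, c1}}) c1 w" and w2: "reach (F - {{u2, c2}}) c2 w"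
    by auto
  have "F - {{u1, c1}} = insert {u2, c2} ?H"
    using assms(4,5) by blast
  with w1 have "reach ?H c1 w \<or> (reach ?H c1 u2 \<and> reach ?H c2 w) \<or> (reach ?H c1 c2 \<and> reach ?H u2 w)"
    by (simp add: reach_insert_edge)
  then show False
  proof (elim disjE conjE)
    assume "reach ?H c1 w"
    then have "reach (F - {{u2, c2}}) c1 w"
      using H2 by (rule reach_mono)
    with w2 not_c2_c1 show False
      by (meson reach_sym reach_trans)
  next
    assume "reach ?H c1 u2"
    with assms(6) have "reach ?H u1 c1"
      by (meson reach_sym reach_trans)
    then have "reach (F - {{u1, c1}}) u1 c1"
      using H1 by (rule reach_mono)
    with bridge1 show False ..
  next
    assume "reach ?H c1 c2"
    then have "reach (F - {{u2, c2}}) c2 c1"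
      using H2 by (meson reach_mono reach_sym)
    with not_c2_c1 show False ..
  qed
qed

text \<open>A play is encoded by the list of edges deleted so far; it is legal iff these are distinct
  edges of the graph.\<close>

definition cat_at :: "'a \<Rightarrow> ('a set list \<Rightarrow> 'a) \<Rightarrow> 'a set list \<Rightarrow> 'a" where
  "cat_at v0 \<sigma> hs = (if hs = [] then v0 else \<sigma> hs)"

definition winning_strategy :: "'a set set \<Rightarrow> 'a \<Rightarrow> ('a set list \<Rightarrow> 'a) \<Rightarrow> bool" where
  "winning_strategy E v0 \<sigma> \<longleftrightarrow> \<not> isolated E v0 \<and>
     (\<forall>hs e. distinct (hs @ [e]) \<and> set (hs @ [e]) \<subseteq> E \<longrightarrow>
        cat_at v0 \<sigma> (hs @ [e]) \<noteq> cat_at v0 \<sigma> hs \<and>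
        reach (E - set (hs @ [e])) (cat_at v0 \<sigma> hs) (cat_at v0 \<sigma> (hs @ [e])))"

lemma deleted_eq_set_map: "deleted es n = set (map es [0..<n])"
  by (auto simp: deleted_def)

lemma cat_pos_eq_cat_at: "cat_pos v0 \<sigma> es n = cat_at v0 \<sigma> (map es [0..<n])"
  by (cases n) (simp_all add: cat_pos_def cat_at_def)

lemma legal_moves_iff:
  "(\<forall>i\<le>n. es i \<in> E - deleted es i) \<longleftrightarrow> distinct (map es [0..<Suc n]) \<and> set (map es [0..<Suc n]) \<subseteq> E"
proof (induction n)
  case (Suc n)
  have "(\<forall>i\<le>Suc n. es i \<in> E - deleted es i) \<longleftrightarrow>
      (\<forall>i\<le>n. es i \<in> E - deleted es i) \<and> es (Suc n) \<in> E - deleted es (Suc n)"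
    by (metis le_Suc_eq)
  with Suc.IH show ?case
    by (auto simp: deleted_eq_set_map)
qed (simp add: deleted_def)

lemma cat_win_iff_winning_strategy: "cat_win V E \<longleftrightarrow> (\<exists>v0\<in>V. \<exists>\<sigma>. winning_strategy E v0 \<sigma>)"
proof
  assume "cat_win V E"
  then obtain v0 \<sigma> where v0: "v0 \<in> V" "\<not> isolated E v0" and
    wins: "\<And>es n. \<forall>i\<le>n. es i \<in> E - deleted es i \<Longrightarrow>
      cat_pos v0 \<sigma> es (Suc n) \<noteq> cat_pos v0 \<sigma> es n \<and>
      reach (E - deleted es (Suc n)) (cat_pos v0 \<sigma> es n) (cat_pos v0 \<sigma> es (Suc n))"
    unfolding cat_win_def Let_def by blast
  have "cat_at v0 \<sigma> (hs @ [e]) \<noteq> cat_at v0 \<sigma> hs \<and>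
      reach (E - set (hs @ [e])) (cat_at v0 \<sigma> hs) (cat_at v0 \<sigma> (hs @ [e]))"
    if legal: "distinct (hs @ [e])" "set (hs @ [e]) \<subseteq> E" for hs e
  proof -
    define es where "es i = (hs @ [e]) ! i" for i
    have hs: "map es [0..<length hs] = hs"
      by (rule nth_equalityI) (simp_all add: es_def nth_append)
    then have hs_e: "map es [0..<Suc (length hs)] = hs @ [e]"
      by (simp add: es_def)
    from legal have "\<forall>i\<le>length hs. es i \<in> E - deleted es i"
      unfolding legal_moves_iff hs_e by blast
    from wins[OF this] show ?thesis
      unfolding cat_pos_eq_cat_at deleted_eq_set_map hs hs_e .
  qed
  with v0 show "\<exists>v0\<in>V. \<exists>\<sigma>. winning_strategy E v0 \<sigma>"
    unfolding winning_strategy_def by blast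
next
  assume "\<exists>v0\<in>V. \<exists>\<sigma>. winning_strategy E v0 \<sigma>"
  then obtain v0 \<sigma> where v0: "v0 \<in> V" "winning_strategy E v0 \<sigma>"
    by blast
  have "\<not> isolated F p \<and> q \<noteq> p \<and> reach F p q"
    if "\<forall>i\<le>n. es i \<in> E - deleted es i" "F = E - deleted es (Suc n)"
      "p = cat_pos v0 \<sigma> es n" "q = cat_pos v0 \<sigma> es (Suc n)" for es n F p q
  proof -
    let ?hs = "map es [0..<n]"
    have "distinct (?hs @ [es n]) \<and> set (?hs @ [es n]) \<subseteq> E"
      using that(1) unfolding legal_moves_iff by simp
    with v0(2) have "cat_at v0 \<sigma> (?hs @ [es n]) \<noteq> cat_at v0 \<sigma> ?hs \<and>
        reach (E - set (?hs @ [es n])) (cat_at v0 \<sigma> ?hs) (cat_at v0 \<sigma> (?hs @ [es n]))"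
      unfolding winning_strategy_def by blast
    then have "q \<noteq> p" "reach F p q"
      using that(2-4) by (simp_all add: cat_pos_eq_cat_at deleted_eq_set_map)
    then show ?thesis
      using reach_not_isolated by metis
  qed
  with v0 show "cat_win V E"
    unfolding cat_win_def winning_strategy_def Let_def by blast
qed

subsection \<open>A binary-tree minor gives the cat a winning strategy\<close>

locale binary_tree_minor =
  fixes V :: "'a set" and E :: "'a set set" and br :: "dir list \<Rightarrow> 'a set"
  assumes simple: "simple_graph V E"
    and branch_vertices: "br \<alpha> \<subseteq> V"
    and branch_connected: "connected_set E (br \<alpha>)"
    and branch_disjoint: "\<alpha> \<noteq> \<beta> \<Longrightarrow> br \<alpha> \<inter> br \<beta> = {}"
    and branch_link: "\<exists>u\<in>br \<alpha>. \<exists>v\<in>br (\<alpha> @ [t]). {u, v} \<in> E"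
begin

definition below :: "dir list \<Rightarrow> 'a set" where
  "below \<alpha> = (\<Union>r. br (\<alpha> @ r))"

definition link :: "dir list \<Rightarrow> dir \<Rightarrow> 'a \<times> 'a" where
  "link \<alpha> t = (SOME uv. fst uv \<in> br \<alpha> \<and> snd uv \<in> br (\<alpha> @ [t]) \<and> {fst uv, snd uv} \<in> E)"

definition link_edge :: "dir list \<Rightarrow> dir \<Rightarrow> 'a set" where
  "link_edge \<alpha> t = {fst (link \<alpha> t), snd (link \<alpha> t)}"

definition home :: "dir list \<Rightarrow> 'a" where
  "home \<alpha> = fst (link \<alpha> L)"

lemma link_spec: "fst (link \<alpha> t) \<in> br \<alpha>" "snd (link \<alpha> t) \<in> br (\<alpha> @ [t])" "link_edge \<alpha> t \<in> E"
proof -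
  have "\<exists>uv. fst uv \<in> br \<alpha> \<and> snd uv \<in> br (\<alpha> @ [t]) \<and> {fst uv, snd uv} \<in> E"
    using branch_link by fastforce
  from someI_ex[OF this] show "fst (link \<alpha> t) \<in> br \<alpha>" "snd (link \<alpha> t) \<in> br (\<alpha> @ [t])" "link_edge \<alpha> t \<in> E"
    unfolding link_def link_edge_def by simp_all
qed

lemma home_in_branch: "home \<alpha> \<in> br \<alpha>"
  unfolding home_def by (rule link_spec)

lemma branch_below: "br (\<alpha> @ r) \<subseteq> below \<alpha>"
  unfolding below_def by blast

lemma below_child: "below (\<alpha> @ [t]) \<subseteq> below \<alpha>"
  unfolding below_def by auto

lemma branch_below_self: "br \<alpha> \<subseteq> below \<alpha>"
  using branch_below[of \<alpha> "[]"] by simp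

lemma link_edge_below: "link_edge \<alpha> t \<subseteq> below \<alpha>"
  using link_spec(1,2) branch_below_self[of \<alpha>] branch_below[of \<alpha> "[t]"]
  unfolding link_edge_def by blast

lemma below_children_disjoint:
  assumes "t \<noteq> t'"
  shows "below (\<alpha> @ [t]) \<inter> below (\<alpha> @ [t']) = {}"
proof -
  have "br (\<alpha> @ t # r) \<inter> br (\<alpha> @ t' # r') = {}" for r r'
    using assms by (intro branch_disjoint) simp
  then show ?thesis
    unfolding below_def by auto
qed

lemma branch_below_child_disjoint: "br \<alpha> \<inter> below (\<alpha> @ [t]) = {}"
proof -
  have "br \<alpha> \<inter> br (\<alpha> @ t # r) = {}" for r
    by (intro branch_disjoint) simp
  then show ?thesis
    unfolding below_def by auto
qed

lemma reach_in_branch: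
  assumes "x \<in> br \<alpha>" "y \<in> br \<alpha>" "\<forall>d\<in>D. \<not> d \<subseteq> br \<alpha>"
  shows "reach (E - D) x y"
proof -
  have "reach_within E (br \<alpha>) x y"
    using branch_connected assms(1,2) unfolding connected_set_def by blast
  then show ?thesis
    using assms(3) by (rule reach_within_reach)
qed

text \<open>The invariant kept by the cat while it sits in the branch set of \<alpha>.\<close>
definition intact :: "'a set set \<Rightarrow> dir list \<Rightarrow> bool" where
  "intact D \<alpha> \<longleftrightarrow> (\<forall>d\<in>D. \<not> d \<subseteq> below \<alpha>)"

definition next_dir :: "dir list \<Rightarrow> 'a set \<Rightarrow> dir" where
  "next_dir \<alpha> e = (if e \<subseteq> below (\<alpha> @ [L]) \<or> e = link_edge \<alpha> L then R else L)"

lemma intact_next_dir: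
  assumes "intact D \<alpha>" "e \<in> E"
  shows "intact (insert e D) (\<alpha> @ [next_dir \<alpha> e])"
proof -
  have "e \<noteq> {}"
    using assms(2) simple unfolding simple_graph_def by blast
  moreover have "snd (link \<alpha> L) \<notin> below (\<alpha> @ [R])"
    using link_spec(2) branch_below_self[of "\<alpha> @ [L]"] below_children_disjoint[of L R \<alpha>] by auto
  ultimately have "\<not> e \<subseteq> below (\<alpha> @ [next_dir \<alpha> e])"
    using below_children_disjoint[of L R \<alpha>] unfolding next_dir_def link_edge_def by auto
  with assms(1) below_child show ?thesis
    unfolding intact_def by blast
qed

lemma reach_home_child:
  assumes "intact (insert e D) (\<alpha> @ [t])" "link_edge \<alpha> t \<notin> insert e D"
    and "reach (E - insert e D) (home \<alpha>) (fst (link \<alpha> t))"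
  shows "reach (E - insert e D) (home \<alpha>) (home (\<alpha> @ [t]))"
proof -
  have "\<forall>d\<in>insert e D. \<not> d \<subseteq> br (\<alpha> @ [t])"
    using assms(1) branch_below_self[of "\<alpha> @ [t]"] unfolding intact_def by blast
  then have "reach (E - insert e D) (snd (link \<alpha> t)) (home (\<alpha> @ [t]))"
    using link_spec(2) home_in_branch by (rule reach_in_branch[rotated 2])
  moreover have "{fst (link \<alpha> t), snd (link \<alpha> t)} \<in> E - insert e D"
    using assms(2) link_spec(3) unfolding link_edge_def by simp
  ultimately show ?thesis
    using assms(3) by (meson reach_edge reach_trans)
qed

lemma reach_home_next_dir:
  assumes "intact D \<alpha>" "e \<in> E"
  shows "reach (E - insert e D) (home \<alpha>) (home (\<alpha> @ [next_dir \<alpha> e]))"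
proof -
  have not_deleted: "link_edge \<alpha> t \<notin> D" for t
    using assms(1) link_edge_below unfolding intact_def by blast
  have e_ne: "e \<noteq> {}"
    using assms(2) simple unfolding simple_graph_def by blast
  have child: "intact (insert e D) (\<alpha> @ [next_dir \<alpha> e])"
    using intact_next_dir[OF assms] .
  show ?thesis
  proof (cases "e \<subseteq> below (\<alpha> @ [L]) \<or> e = link_edge \<alpha> L")
    case False
    then have "next_dir \<alpha> e = L" "link_edge \<alpha> L \<notin> insert e D"
      using not_deleted by (auto simp: next_dir_def)
    with child show ?thesis
      using reach_home_child[of e D \<alpha> L] unfolding home_def by simp
  next
    case True
    then have dir: "next_dir \<alpha> e = R"
      by (simp add: next_dir_def)
    have disj: "br \<alpha> \<inter> br (\<alpha> @ [L]) = {}" "br \<alpha> \<inter> br (\<alpha> @ [R]) = {}"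
      "br (\<alpha> @ [L]) \<inter> br (\<alpha> @ [R]) = {}" "below (\<alpha> @ [L]) \<inter> below (\<alpha> @ [R]) = {}"
      by (simp_all add: branch_disjoint below_children_disjoint)
    have "\<not> e \<subseteq> br \<alpha>"
      using True e_ne branch_below_child_disjoint[of \<alpha> L] link_spec(2)[of \<alpha> L] disj(1)
      unfolding link_edge_def by blast
    moreover have "e \<noteq> link_edge \<alpha> R"
    proof -
      have "snd (link \<alpha> R) \<notin> below (\<alpha> @ [L])"
        using link_spec(2)[of \<alpha> R] branch_below_self[of "\<alpha> @ [R]"] disj(4) by blast
      moreover have "snd (link \<alpha> R) \<notin> link_edge \<alpha> L"
        using link_spec(1)[of \<alpha> L] link_spec(2)[of \<alpha> L] link_spec(2)[of \<alpha> R] disj(2,3)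
        unfolding link_edge_def disjoint_iff by auto
      ultimately have "snd (link \<alpha> R) \<notin> e"
        using True by blast
      then show ?thesis
        unfolding link_edge_def by blast
    qed
    ultimately have "\<forall>d\<in>insert e D. \<not> d \<subseteq> br \<alpha>"
      using assms(1) branch_below_self[of \<alpha>] unfolding intact_def by blast
    then have "reach (E - insert e D) (home \<alpha>) (fst (link \<alpha> R))"
      using home_in_branch link_spec(1) by (rule reach_in_branch[rotated 2])
    with child dir not_deleted \<open>e \<noteq> link_edge \<alpha> R\<close> show ?thesis
      by (simp add: reach_home_child)
  qed
qed

lemma home_child_ne: "home (\<alpha> @ [t]) \<noteq> home \<alpha>"
  using home_in_branch[of \<alpha>] home_in_branch[of "\<alpha> @ [t]"] branch_disjoint[of "\<alpha> @ [t]" \<alpha>]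
  by auto

definition node_of :: "'a set list \<Rightarrow> dir list" where
  "node_of hs = fold (\<lambda>e \<alpha>. \<alpha> @ [next_dir \<alpha> e]) hs []"

lemma node_of_snoc: "node_of (hs @ [e]) = node_of hs @ [next_dir (node_of hs) e]"
  by (simp add: node_of_def)

lemma intact_node_of: "set hs \<subseteq> E \<Longrightarrow> intact (set hs) (node_of hs)"
proof (induction hs rule: rev_induct)
  case Nil
  then show ?case
    by (simp add: intact_def)
next
  case (snoc e hs)
  then show ?case
    using intact_next_dir[of "set hs" "node_of hs" e] by (simp add: node_of_snoc)
qed

lemma winning_home: "winning_strategy E (home []) (\<lambda>hs. home (node_of hs))"
proof -
  have "cat_at (home []) (\<lambda>hs. home (node_of hs)) hs = home (node_of hs)" for hs
    by (simp add: cat_at_def node_of_def)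
  moreover have "\<not> isolated E (home [])"
    using link_spec(3) unfolding isolated_def link_edge_def home_def by blast
  ultimately show ?thesis
    unfolding winning_strategy_def
    using intact_node_of reach_home_next_dir home_child_ne by (simp add: node_of_snoc)
qed

lemma cat_wins: "cat_win V E"
  unfolding cat_win_iff_winning_strategy
  using winning_home home_in_branch branch_vertices by blast

end

subsection \<open>Forks from a winning cat strategy\<close>

locale cat_strategy =
  fixes E :: "'a set set" and v0 :: 'a and \<sigma> :: "'a set list \<Rightarrow> 'a"
  assumes winning: "winning_strategy E v0 \<sigma>"
begin

abbreviation pos :: "'a set list \<Rightarrow> 'a" where
  "pos \<equiv> cat_at v0 \<sigma>"

lemma cat_moves:
  assumes "distinct (hs @ [e])" "set (hs @ [e]) \<subseteq> E"
  shows "pos (hs @ [e]) \<noteq> pos hs" "reach (E - set (hs @ [e])) (pos hs) (pos (hs @ [e]))"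
  using winning assms unfolding winning_strategy_def by blast+

lemma herder_can_move:
  assumes "distinct hs" "set hs \<subseteq> E"
  obtains f where "f \<in> E" "f \<notin> set hs"
proof (cases hs rule: rev_cases)
  case Nil
  then show ?thesis
    using winning that unfolding winning_strategy_def isolated_def by auto
next
  case (snoc hs' e)
  with assms have "\<not> isolated (E - set hs) (pos hs')"
    using cat_moves[of hs' e] reach_not_isolated by metis
  then show ?thesis
    using that unfolding isolated_def by blast
qed

definition attainable :: "'a set set \<Rightarrow> 'a \<Rightarrow> bool" where
  "attainable F a \<longleftrightarrow> F \<subseteq> E \<and>
     (\<exists>hs. distinct hs \<and> set hs \<subseteq> E \<and> E - set hs \<subseteq> F \<and> reach F a (pos hs))"

lemma attainable_start: "attainable E v0"
  unfolding attainable_def by (intro conjI exI[of _ "[]"]) (simp_all add: cat_at_def)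

lemma attainable_edges: "attainable F a \<Longrightarrow> F \<subseteq> E"
  by (simp add: attainable_def)

lemma attainable_reach: "attainable F a \<Longrightarrow> reach F a b \<Longrightarrow> attainable F b"
  unfolding attainable_def by (meson reach_sym reach_trans)

lemma attainable_mono: "attainable F a \<Longrightarrow> F \<subseteq> G \<Longrightarrow> G \<subseteq> E \<Longrightarrow> attainable G a"
  unfolding attainable_def by (meson order_trans reach_mono)

text \<open>Let the herder delete any edge f, so that the cat leaves its vertex p along some edge
  {p, x}. Deleting {p, x} right away keeps the cat on the side of p; deleting it after f traps the
  cat on the side of x.\<close>
lemma attainable_both_ends:
  assumes "distinct hs" "set hs \<subseteq> E"
  obtains x where "{pos hs, x} \<in> E - set hs"
    "attainable (E - set hs - {{pos hs, x}}) (pos hs)" "attainable (E - set hs - {{pos hs, x}}) x"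
proof -
  obtain f where f: "f \<in> E" "f \<notin> set hs"
    using herder_can_move assms by blast
  let ?p = "pos hs" and ?q = "pos (hs @ [f])"
  have "reach (E - set (hs @ [f])) ?p ?q" "?p \<noteq> ?q"
    using cat_moves[of hs f] assms f by auto
  then obtain x where x: "{?p, x} \<in> E - set (hs @ [f])" "reach (E - set (hs @ [f]) - {{?p, x}}) x ?q"
    by (rule reach_first_edge)
  define e where "e = {?p, x}"
  have legal_e: "distinct (hs @ [e])" "set (hs @ [e]) \<subseteq> E"
    using assms x(1) unfolding e_def by auto
  have legal_fe: "distinct ((hs @ [f]) @ [e])" "set ((hs @ [f]) @ [e]) \<subseteq> E"
    using assms f x(1) unfolding e_def by auto
  have F: "E - set (hs @ [e]) = E - set hs - {e}"
    by auto
  have p_side: "attainable (E - set (hs @ [e])) ?p"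
    using legal_e cat_moves(2)[OF legal_e] unfolding attainable_def by blast
  have "E - set (hs @ [f]) - {{?p, x}} = E - set ((hs @ [f]) @ [e])"
    unfolding e_def by auto
  with x(2) have "reach (E - set ((hs @ [f]) @ [e])) x ?q"
    by simp
  then have "reach (E - set ((hs @ [f]) @ [e])) x (pos ((hs @ [f]) @ [e]))"
    using cat_moves(2)[OF legal_fe] by (rule reach_trans)
  then have "reach (E - set (hs @ [e])) x (pos ((hs @ [f]) @ [e]))"
    by (rule reach_mono) auto
  with legal_fe have x_side: "attainable (E - set (hs @ [e])) x"
    unfolding attainable_def by (intro conjI exI[of _ "(hs @ [f]) @ [e]"]) auto
  have "{?p, x} \<in> E - set hs"
    using x(1) by auto
  then show ?thesis
    using p_side[unfolded F] x_side[unfolded F] unfolding e_def by (rule that)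
qed

lemma attainable_cut:
  assumes "attainable F a"
  obtains u c where "{u, c} \<in> F" "reach (F - {{u, c}}) a u"
    "attainable (F - {{u, c}}) u" "attainable (F - {{u, c}}) c"
proof -
  obtain hs where hs: "distinct hs" "set hs \<subseteq> E" "E - set hs \<subseteq> F" "reach F a (pos hs)"
    using assms unfolding attainable_def by blast
  obtain x where x: "{pos hs, x} \<in> E - set hs"
    "attainable (E - set hs - {{pos hs, x}}) (pos hs)" "attainable (E - set hs - {{pos hs, x}}) x"
    using attainable_both_ends hs(1,2) by blast
  let ?e = "{pos hs, x}"
  have e: "?e \<in> F"
    using x(1) hs(3) by blast
  have sides: "attainable (F - {?e}) (pos hs)" "attainable (F - {?e}) x"
    using x(2,3) attainable_edges[OF assms] hs(3) by (auto elim!: attainable_mono)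
  have "F = insert ?e (F - {?e})"
    using e by blast
  with hs(4) have "reach (F - {?e}) a (pos hs) \<or> reach (F - {?e}) a x"
    using reach_insert_edge[of "pos hs" x "F - {?e}" a "pos hs"] by auto
  then show ?thesis
  proof
    assume "reach (F - {?e}) a (pos hs)"
    with that e sides show ?thesis
      by blast
  next
    assume "reach (F - {?e}) a x"
    with that[of x "pos hs"] e sides show ?thesis
      by (simp add: insert_commute)
  qed
qed

text \<open>Cut an edge next to u as in attainable_cut. Either u and a stay connected, or the walk
  from u to a crosses the edge and its tail is a shorter walk from the far end to a.\<close>
lemma attainable_cut_toward:
  assumes "attainable F a" "walk F vs" "vs \<noteq> []" "hd vs = u" "last vs = a"
  shows "\<exists>u' c. {u', c} \<in> F \<and> reach (F - {{u', c}}) a u' \<and> reach (F - {{u', c}}) a u \<and>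
    attainable (F - {{u', c}}) c"
  using assms
proof (induction "length vs" arbitrary: F u vs rule: less_induct)
  case less
  have "reach F u a"
    using walk_reach[OF less.prems(2,3)] less.prems(4,5) by simp
  then have "attainable F u"
    using less.prems(1) by (meson attainable_reach reach_sym)
  then obtain u' c where e: "{u', c} \<in> F" "reach (F - {{u', c}}) u u'" "attainable (F - {{u', c}}) c"
    by (rule attainable_cut)
  let ?e = "{u', c}"
  show ?case
  proof (cases "reach (F - {?e}) u a")
    case True
    then have "reach (F - {?e}) a u'"
      using e(2) by (meson reach_sym reach_trans)
    with True e show ?thesis
      by (blast intro: reach_sym)
  next
    case False
    then have "\<not> walk (F - {?e}) vs"
      using walk_reach less.prems(3-5) by fastforce
    then obtain ws where ws: "ws \<noteq> []" "length ws < length vs" "walk (F - {?e}) ws"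
      "last ws = a" "hd ws \<in> ?e"
      using walk_last_crossing[OF less.prems(2,3)] less.prems(5) by auto
    have ws_a: "reach (F - {?e}) (hd ws) a"
      using walk_reach[OF ws(3,1)] ws(4) by simp
    with False e(2) ws(5) have hd: "hd ws = c"
      by (auto intro: reach_trans)
    with e(3) ws_a have "attainable (F - {?e}) a"
      by (simp add: attainable_reach)
    from less.hyps[OF ws(2) this ws(3,1) hd ws(4)] obtain uL cL where
      g: "{uL, cL} \<in> F - {?e}" "reach (F - {?e} - {{uL, cL}}) a uL"
      "reach (F - {?e} - {{uL, cL}}) a c" "attainable (F - {?e} - {{uL, cL}}) cL"
      by blast
    let ?g = "{uL, cL}"
    have sub: "F - {?e} - {?g} \<subseteq> F - {?g}"
      by blast
    have "\<not> reach (F - {?e}) u uL"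
    proof
      assume "reach (F - {?e}) u uL"
      moreover have "reach (F - {?e}) uL a"
        using g(2) by (meson Diff_subset reach_mono reach_sym)
      ultimately show False
        using False by (meson reach_trans)
    qed
    then have "reach (F - {?e} - {?g}) u u'"
      using reach_avoiding[OF e(2), of uL ?g] by simp
    moreover have "{c, u'} \<in> F - {?g}"
      using e(1) g(1) by (auto simp: insert_commute)
    ultimately have "reach (F - {?g}) a u"
      using reach_mono[OF g(3) sub] reach_mono[OF _ sub] by (meson reach_step reach_sym reach_trans)
    moreover have "reach (F - {?g}) a uL"
      using g(2) sub by (rule reach_mono)
    moreover have "attainable (F - {?g}) cL"
      using g(4) sub attainable_edges[OF less.prems(1)] by (blast intro: attainable_mono)
    ultimately show ?thesis
      using g(1) by blast
  qed
qed

definition is_fork :: "'a set set \<Rightarrow> 'a \<Rightarrow> (dir \<Rightarrow> 'a) \<Rightarrow> (dir \<Rightarrow> 'a) \<Rightarrow> bool" where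
  "is_fork F a u c \<longleftrightarrow> {u L, c L} \<noteq> {u R, c R} \<and>
     (\<forall>t. {u t, c t} \<in> F \<and> reach (F - {{u L, c L}, {u R, c R}}) a (u t) \<and>
       attainable (F - {{u t, c t}}) (c t))"

lemma attainable_fork:
  assumes "attainable F a"
  shows "\<exists>u c. is_fork F a u c"
proof -
  obtain uR cR where e: "{uR, cR} \<in> F" "reach (F - {{uR, cR}}) a uR"
    "attainable (F - {{uR, cR}}) uR" "attainable (F - {{uR, cR}}) cR"
    using assms by (rule attainable_cut)
  let ?e = "{uR, cR}"
  obtain vs where vs: "vs \<noteq> []" "hd vs = uR" "last vs = a" "walk (F - {?e}) vs"
    using reach_distinct_walk[OF reach_sym[OF e(2)]] by blast
  have "attainable (F - {?e}) a"
    using e(3) reach_sym[OF e(2)] by (rule attainable_reach)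
  from attainable_cut_toward[OF this vs(4,1,2,3)] obtain uL cL where
    g: "{uL, cL} \<in> F - {?e}" "reach (F - {?e} - {{uL, cL}}) a uL"
    "reach (F - {?e} - {{uL, cL}}) a uR" "attainable (F - {?e} - {{uL, cL}}) cL"
    by blast
  have "attainable (F - {{uL, cL}}) cL"
    using g(4) attainable_edges[OF assms] by (blast intro: attainable_mono)
  moreover have "F - {?e} - {{uL, cL}} = F - {{uL, cL}, ?e}"
    by blast
  ultimately have "is_fork F a (case_dir uL uR) (case_dir cL cR)"
    using e g unfolding is_fork_def by (auto split: dir.split)
  then show ?thesis
    by blast
qed

definition fork :: "'a set set \<Rightarrow> 'a \<Rightarrow> (dir \<Rightarrow> 'a) \<times> (dir \<Rightarrow> 'a)" where
  "fork F a = (SOME uc. is_fork F a (fst uc) (snd uc))"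

lemma fork_is_fork: "attainable F a \<Longrightarrow> is_fork F a (fst (fork F a)) (snd (fork F a))"
  unfolding fork_def using attainable_fork by (metis (mono_tags, lifting) fst_conv snd_conv someI)

text \<open>The remaining edges and the root at the node \<beta> of the binary tree obtained by following
  forks along \<beta>.\<close>
definition node :: "dir list \<Rightarrow> 'a set set \<times> 'a" where
  "node \<beta> = fold (\<lambda>t (F, a). (F - {{fst (fork F a) t, snd (fork F a) t}}, snd (fork F a) t)) \<beta> (E, v0)"

definition edges_at :: "dir list \<Rightarrow> 'a set set" where
  "edges_at \<beta> = fst (node \<beta>)"

definition root :: "dir list \<Rightarrow> 'a" where
  "root \<beta> = snd (node \<beta>)"

definition near :: "dir list \<Rightarrow> dir \<Rightarrow> 'a" where
  "near \<beta> = fst (fork (edges_at \<beta>) (root \<beta>))"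

definition far :: "dir list \<Rightarrow> dir \<Rightarrow> 'a" where
  "far \<beta> = snd (fork (edges_at \<beta>) (root \<beta>))"

lemma node_Nil: "edges_at [] = E" "root [] = v0"
  by (simp_all add: edges_at_def root_def node_def)

lemma node_snoc: "edges_at (\<beta> @ [t]) = edges_at \<beta> - {{near \<beta> t, far \<beta> t}}" "root (\<beta> @ [t]) = far \<beta> t"
  by (simp_all add: edges_at_def root_def near_def far_def node_def split: prod.split)

lemma attainable_node: "attainable (edges_at \<beta>) (root \<beta>)"
proof (induction \<beta> rule: rev_induct)
  case Nil
  then show ?case
    by (simp add: node_Nil attainable_start)
next
  case (snoc t \<beta>)
  then show ?case
    using fork_is_fork[OF snoc] unfolding is_fork_def near_def far_def node_snoc by blast
qed

lemma fork_node: "is_fork (edges_at \<beta>) (root \<beta>) (near \<beta>) (far \<beta>)"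
  unfolding near_def far_def using attainable_node by (rule fork_is_fork)

end

subsection \<open>The fork tree of a forest is a binary-tree minor\<close>

locale forest_cat_strategy = cat_strategy E v0 \<sigma> for E :: "'a set set" and v0 \<sigma> +
  fixes V :: "'a set"
  assumes forest: "forest V E"
begin

definition fork_edge :: "dir list \<Rightarrow> dir \<Rightarrow> 'a set" where
  "fork_edge \<beta> t = {near \<beta> t, far \<beta> t}"

definition subtree :: "dir list \<Rightarrow> 'a set" where
  "subtree \<beta> = component (edges_at \<beta>) (root \<beta>)"

definition branch :: "dir list \<Rightarrow> 'a set" where
  "branch \<beta> = component (edges_at \<beta> - {fork_edge \<beta> L, fork_edge \<beta> R}) (root \<beta>)"

lemma fork_edge_distinct: "fork_edge \<beta> L \<noteq> fork_edge \<beta> R"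
  and fork_edge_in: "fork_edge \<beta> t \<in> edges_at \<beta>"
  and reach_near: "reach (edges_at \<beta> - {fork_edge \<beta> L, fork_edge \<beta> R}) (root \<beta>) (near \<beta> t)"
  using fork_node[of \<beta>] unfolding is_fork_def fork_edge_def by blast+

lemma edges_at_subset: "edges_at \<beta> \<subseteq> E"
  using attainable_node by (rule attainable_edges)

lemma simple: "simple_graph V E"
  using forest by (simp add: forest_def)

lemma root_vertex: "root \<beta> \<in> V"
proof (cases \<beta> rule: rev_cases)
  case Nil
  obtain w where "{v0, w} \<in> E"
    using winning unfolding winning_strategy_def isolated_def by blast
  with Nil show ?thesis
    using simple_graph_edge(2)[OF simple] by (simp add: node_Nil)
next
  case (snoc \<beta>' t)
  then show ?thesis
    using fork_edge_in[of \<beta>' t] edges_at_subset simple_graph_edge(3)[OF simple]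
    by (auto simp: node_snoc fork_edge_def)
qed

lemma subtree_child: "subtree (\<beta> @ [t]) \<subseteq> subtree \<beta>"
proof -
  have "reach (edges_at \<beta>) (root \<beta>) (near \<beta> t)"
    using reach_near by (rule reach_mono) blast
  then have "reach (edges_at \<beta>) (root \<beta>) (far \<beta> t)"
    using fork_edge_in[of \<beta> t] unfolding fork_edge_def by (rule reach_step)
  then show ?thesis
    unfolding subtree_def node_snoc
    by (meson Diff_subset component_mono component_subset order_trans)
qed

lemma subtree_append: "subtree (\<beta> @ \<gamma>) \<subseteq> subtree \<beta>"
proof (induction \<gamma> rule: rev_induct)
  case (snoc t \<gamma>)
  then show ?case
    using subtree_child[of "\<beta> @ \<gamma>" t] by simp
qed simp

lemma branch_subtree: "branch \<beta> \<subseteq> subtree \<beta>"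
  unfolding branch_def subtree_def by (rule component_mono) blast

lemma branch_descendant: "branch (\<beta> @ t # \<gamma>) \<subseteq> subtree (\<beta> @ [t])"
  using branch_subtree[of "\<beta> @ t # \<gamma>"] subtree_append[of "\<beta> @ [t]" \<gamma>] by simp

lemma branch_child_disjoint: "branch \<beta> \<inter> subtree (\<beta> @ [t]) = {}"
proof -
  have "edges_at \<beta> - {fork_edge \<beta> L, fork_edge \<beta> R} \<subseteq> edges_at \<beta> - {fork_edge \<beta> t}"
    by (cases t) auto
  from forest_far_side_disjoint[OF forest edges_at_subset fork_edge_in[unfolded fork_edge_def]
      this[unfolded fork_edge_def] reach_near[unfolded fork_edge_def]]
  show ?thesis
    unfolding branch_def subtree_def node_snoc fork_edge_def .
qed

lemma children_disjoint:
  assumes "t \<noteq> t'"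
  shows "subtree (\<beta> @ [t]) \<inter> subtree (\<beta> @ [t']) = {}"
proof -
  have pair: "{fork_edge \<beta> t, fork_edge \<beta> t'} = {fork_edge \<beta> L, fork_edge \<beta> R}"
    and ne: "fork_edge \<beta> t \<noteq> fork_edge \<beta> t'"
    using assms fork_edge_distinct by (cases t; cases t'; auto)+
  have "reach (edges_at \<beta> - {fork_edge \<beta> t, fork_edge \<beta> t'}) (near \<beta> t) (near \<beta> t')"
    unfolding pair using reach_near by (meson reach_sym reach_trans)
  from forest_far_sides_disjoint[OF forest edges_at_subset fork_edge_in[unfolded fork_edge_def]
      fork_edge_in[unfolded fork_edge_def] ne[unfolded fork_edge_def] this[unfolded fork_edge_def]]
  show ?thesis
    unfolding subtree_def node_snoc fork_edge_def .
qed

lemma branch_disjoint: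
  assumes "\<beta> \<noteq> \<gamma>"
  shows "branch \<beta> \<inter> branch \<gamma> = {}"
proof (cases \<beta> \<gamma> rule: prefix_cases)
  case 1
  with assms obtain t r where "\<gamma> = \<beta> @ t # r"
    by (metis prefixE append_Nil2 neq_Nil_conv)
  then show ?thesis
    using branch_descendant[of \<beta> t r] branch_child_disjoint[of \<beta> t] by blast
next
  case 2
  then obtain t r where "\<beta> = \<gamma> @ t # r"
    by (metis strict_prefixE' )
  then show ?thesis
    using branch_descendant[of \<gamma> t r] branch_child_disjoint[of \<gamma> t] by blast
next
  case 3
  then obtain \<rho> t r t' r' where "t \<noteq> t'" "\<beta> = \<rho> @ t # r" "\<gamma> = \<rho> @ t' # r'"
    using parallel_decomp by blast
  then show ?thesis
    using branch_descendant[of \<rho> t r] branch_descendant[of \<rho> t' r'] children_disjoint[of t t' \<rho>]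
    by blast
qed

lemma Bomega_minor: "is_minor Bomega_V Bomega_E V E"
  unfolding is_minor_def
proof (intro exI[of _ branch] conjI ballI allI impI)
  fix \<beta> :: "dir list"
  have "root \<beta> \<in> branch \<beta>"
    by (simp add: branch_def)
  then show "branch \<beta> \<noteq> {}"
    by blast
  show "branch \<beta> \<subseteq> V"
    unfolding branch_def using edges_at_subset root_vertex
    by (intro component_vertices[OF simple]) blast+
  show "connected_set E (branch \<beta>)"
    unfolding branch_def using edges_at_subset by (intro connected_set_component) blast
next
  fix \<beta> \<gamma> :: "dir list"
  assume "\<beta> \<noteq> \<gamma>"
  then show "branch \<beta> \<inter> branch \<gamma> = {}"
    by (rule branch_disjoint)
next
  fix \<beta> \<gamma> :: "dir list"
  assume "{\<beta>, \<gamma>} \<in> Bomega_E"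
  then obtain \<alpha> t where "{\<beta>, \<gamma>} = {\<alpha>, \<alpha> @ [t]}"
    unfolding Bomega_E_def by blast
  moreover have "near \<alpha> t \<in> branch \<alpha>" "far \<alpha> t \<in> branch (\<alpha> @ [t])"
    using reach_near by (simp_all add: branch_def node_snoc)
  moreover have "{near \<alpha> t, far \<alpha> t} \<in> E"
    using fork_edge_in edges_at_subset unfolding fork_edge_def by blast
  moreover from this have "{far \<alpha> t, near \<alpha> t} \<in> E"
    by (simp add: insert_commute)
  ultimately show "\<exists>u\<in>branch \<beta>. \<exists>v\<in>branch \<gamma>. {u, v} \<in> E"
    unfolding doubleton_eq_iff by blast
qed

end

lemma binary_tree_minorI:
  assumes "simple_graph V E" "is_minor Bomega_V Bomega_E V E"
  obtains br where "binary_tree_minor V E br"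
proof -
  obtain br :: "dir list \<Rightarrow> 'a set" where
    br: "\<forall>\<alpha>. br \<alpha> \<subseteq> V \<and> connected_set E (br \<alpha>)"
      "\<forall>\<alpha> \<beta>. \<alpha> \<noteq> \<beta> \<longrightarrow> br \<alpha> \<inter> br \<beta> = {}"
      "\<forall>x y. {x, y} \<in> Bomega_E \<longrightarrow> (\<exists>u\<in>br x. \<exists>v\<in>br y. {u, v} \<in> E)"
    using assms(2) unfolding is_minor_def Bomega_V_def by auto
  have "{\<alpha>, \<alpha> @ [t]} \<in> Bomega_E" for \<alpha> t
    unfolding Bomega_E_def by blast
  then have "binary_tree_minor V E br"
    using assms(1) br by unfold_locales simp_all
  then show ?thesis
    by (rule that)
qed

theorem mainTheorem12:
  fixes V :: "'a set" and E :: "'a set set"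
  assumes "is_tree V E"
  shows "cat_win V E \<longleftrightarrow> is_minor Bomega_V Bomega_E V E"
proof
  have forest: "forest V E"
    using assms by (rule tree_forest)
  assume "cat_win V E"
  then obtain v0 \<sigma> where "winning_strategy E v0 \<sigma>"
    unfolding cat_win_iff_winning_strategy by blast
  then interpret forest_cat_strategy E v0 \<sigma> V
    using forest by unfold_locales
  show "is_minor Bomega_V Bomega_E V E"
    by (rule Bomega_minor)
next
  assume minor: "is_minor Bomega_V Bomega_E V E"
  have "simple_graph V E"
    using assms by (simp add: is_tree_def)
  then obtain br where "binary_tree_minor V E br"
    using minor by (rule binary_tree_minorI)
  then show "cat_win V E"
    by (rule binary_tree_minor.cat_wins)
qed

end
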